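(* Let $\Gamma$ be an $(l,2)$-hyperflower on $N$ vertices, with eigenvalues $\lambda_1\le\cdots\le\lambda_N$ of its (signless) normalized Laplacian. Then the spectrum of $\Gamma$ is given by: $0$, with multiplicity $N-l-1$; $1$, with multiplicity at least $l-1$; $\lambda_N>1$; and $\lambda_{N-1}=N-\lambda_N-l+1\geq 1$. In the particular case in which $\#h$ is the same for all $h\in\mathcal{H}$, $\lambda_N=\frac{N-l}{2}+1$ and $\lambda_{N-1}=\frac{N-l}{2}$.
   Context: A hypergraph $\Gamma=(\mathcal{V},\mathcal{H})$ has a finite vertex set $\mathcal{V}=\{v_1,\ldots,v_N\}$ and a set $\mathcal{H}$ of nonempty subsets of $\mathcal{V}$ (hyperedges); standing assumption: no isolated vertices. $\deg(v)$ is the number of hyperedges containing $v$, $D$ the diagonal degree matrix, $A$ the matrix with $A_{ii}=0$ and $A_{ij}=-\#\{h\in\mathcal{H}: v_i,v_j\in h\}$ for $i\ne j$, and the (signless) normalized Laplacian is $L=\mathrm{Id}-D^{-1}A$, whose eigenvalues are real and denoted $\lambda_1\le\cdots\le\lambda_N$; $\#h$ is the cardinality of $h$. An $(l,r)$-hyperflower is a hypergraph whose vertex set is $\mathcal{V}=U\sqcup\mathcal{W}$ with $U=\{v_1,\ldots,v_l\}$ (peripheral vertices) and such that there are $r$ pairwise disjoint nonempty sets $h_1,\ldots,h_r\subseteq\mathcal{W}$ with $\mathcal{H}=\{h_i\cup\{v_j\}: i=1,\ldots,r,\ j=1,\ldots,l\}$ (by the no-isolated-vertex assumption, $\mathcal{W}=h_1\cup\cdots\cup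 h_r$). *)

theory Defs
  imports "Jordan_Normal_Form.Char_Poly"
begin

text \<open>Hypergraphs with vertex set V = {0..<N} (vertices v_1..v_N indexed by 0..N-1)
and a set H of hyperedges.\<close>

definition hypergraph :: "nat \<Rightarrow> nat set set \<Rightarrow> bool" where
  "hypergraph N H \<longleftrightarrow> (\<forall>h\<in>H. h \<noteq> {} \<and> h \<subseteq> {..<N}) \<and>
     (\<forall>v<N. \<exists>h\<in>H. v \<in> h)"

definition hdeg :: "nat set set \<Rightarrow> nat \<Rightarrow> nat" where
  "hdeg H v = card {h\<in>H. v \<in> h}"

definition degree_mat :: "nat \<Rightarrow> nat set set \<Rightarrow> real mat" where
  "degree_mat N H = mat N N (\<lambda>(i,j). if i = j then real (hdeg H i) else 0)"

definition degree_mat_inv :: "nat \<Rightarrow> nat set set \<Rightarrow> real mat" where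
  "degree_mat_inv N H = mat N N (\<lambda>(i,j). if i = j then 1 / real (hdeg H i) else 0)"

definition adj_mat :: "nat \<Rightarrow> nat set set \<Rightarrow> real mat" where
  "adj_mat N H = mat N N (\<lambda>(i,j). if i = j then 0
      else - real (card {h\<in>H. i \<in> h \<and> j \<in> h}))"

definition norm_laplacian :: "nat \<Rightarrow> nat set set \<Rightarrow> real mat" where
  "norm_laplacian N H = 1\<^sub>m N - degree_mat_inv N H * adj_mat N H"

definition is_sorted_spectrum :: "nat \<Rightarrow> nat set set \<Rightarrow> real list \<Rightarrow> bool" where
  "is_sorted_spectrum N H ls \<longleftrightarrow> length ls = N \<and> sorted ls \<and>
     char_poly (norm_laplacian N H) = (\<Prod>i<N. [:- (ls ! i), 1:])"

definition hyperflower :: "nat \<Rightarrow> nat \<Rightarrow> nat \<Rightarrow> nat set set \<Rightarrow> bool" where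
  "hyperflower l r N H \<longleftrightarrow> (\<exists>U hs.
     U \<subseteq> {..<N} \<and> card U = l \<and>
     (\<forall>i<r. hs i \<noteq> {} \<and> hs i \<subseteq> {..<N} - U) \<and>
     (\<forall>i<r. \<forall>j<r. i \<noteq> j \<longrightarrow> hs i \<inter> hs j = {}) \<and>
     {..<N} = U \<union> (\<Union>i<r. hs i) \<and>
     H = {hs i \<union> {u} | i u. i < r \<and> u \<in> U})"

end

theory Submission
  imports Defs
begin

(* With a = #h1 and b = #h2, every row of L is a multiple of a unit vector plus a function that is
   constant on each of the cells U, h1, h2, so L acts on a vector through its value at the row index
   and its three cell sums.  Hence L multiplies each difference e_j - e_j' of two vertices of one cell
   by 1 (in U) or by 0 (in a petal), it kills the vector z equal to a b on U, -b on h1 and -a on h2,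
   and it maps the indicators of h1 and h2 into the span of z and these two indicators.  In the basis
   formed by z, the two indicators and the differences, L is diagonal up to a 2x2 block with
   characteristic polynomial (x - a - 1/2) (x - b - 1/2) - 1/4, whose roots
   (a + b + 1 -+ sqrt (1 + (a - b)^2)) / 2 are the two largest eigenvalues. *)

lemma permutes_id_or_transpose:
  assumes p: "p permutes S" and st: "s \<in> S" "t \<in> S" "s \<noteq> t"
    and fixed: "\<And>i. i \<in> S \<Longrightarrow> p i \<notin> {s, t} \<Longrightarrow> p i = i"
  shows "p = id \<or> p = Transposition.transpose s t"
proof -
  have ps: "p s \<in> {s, t}" using fixed[OF st(1)] by blast
  have pt: "p t \<in> {s, t}" using fixed[OF st(2)] by blast
  have inj: "inj p" using p by (rule permutes_inj)
  have pst: "p s \<noteq> p t" using inj st(3) by (meson injD)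
  have others: "p i = i" if i: "i \<notin> {s, t}" for i
  proof (cases "i \<in> S")
    case True
    have "p i \<notin> {s, t}" using ps pt pst inj i by (metis injD insert_iff singletonD)
    then show ?thesis using fixed[OF True] by blast
  next
    case False
    then show ?thesis using p by (simp add: permutes_not_in)
  qed
  show ?thesis
  proof (cases "p s = s")
    case True
    then have "p t = t" using pt pst by auto
    then have "p = id" using True others by (intro ext) (metis id_apply insertE singletonD)
    then show ?thesis ..
  next
    case False
    then have "p s = t" "p t = s" using ps pt pst by auto
    then have "p = Transposition.transpose s t"
      using others by (intro ext) (auto simp: Transposition.transpose_def)
    then show ?thesis ..
  qed
qed

lemma det_diagonal_except_two_columns:
  fixes A :: "'a::comm_ring_1 mat"
  assumes A: "A \<in> carrier_mat n n" and st: "s < n" "t < n" "s \<noteq> t"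
    and off_diag: "\<And>i j. i < n \<Longrightarrow> j < n \<Longrightarrow> i \<noteq> j \<Longrightarrow> j \<notin> {s, t} \<Longrightarrow> A $$ (i, j) = 0"
  shows "det A = (\<Prod>j\<in>{0..<n} - {s, t}. A $$ (j, j)) *
    (A $$ (s, s) * A $$ (t, t) - A $$ (s, t) * A $$ (t, s))"
proof -
  let ?term = "\<lambda>p. signof p * (\<Prod>i = 0..<n. A $$ (i, p i))"
  let ?swap = "Transposition.transpose s t"
  let ?rest = "\<Prod>j\<in>{0..<n} - {s, t}. A $$ (j, j)"
  have vanish: "?term p = 0" if p: "p permutes {0..<n}" "p \<noteq> id" "p \<noteq> ?swap" for p
  proof -
    have "\<not> (\<forall>i. i \<in> {0..<n} \<longrightarrow> p i \<notin> {s, t} \<longrightarrow> p i = i)"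
      using permutes_id_or_transpose[OF p(1)] st p(2,3) by auto
    then obtain i where i: "i < n" "p i \<notin> {s, t}" "p i \<noteq> i" by auto
    have "p i < n" using p(1) i(1) by (simp add: permutes_in_image)
    then have "A $$ (i, p i) = 0" using off_diag[of i "p i"] i by simp
    then have "(\<Prod>i = 0..<n. A $$ (i, p i)) = 0" using i(1) by (intro prod_zero) auto
    then show ?thesis by simp
  qed
  have id_term: "?term id = A $$ (s, s) * A $$ (t, t) * ?rest"
    and swap_term: "?term ?swap = - (A $$ (s, t) * A $$ (t, s) * ?rest)"
  proof -
    have split: "(\<Prod>i = 0..<n. f i) = f s * (f t * (\<Prod>i\<in>{0..<n} - {s, t}. f i))"
      for f :: "nat \<Rightarrow> 'a"
    proof -
      have "{0..<n} = insert s (insert t ({0..<n} - {s, t}))" using st by auto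
      then have "(\<Prod>i = 0..<n. f i) = (\<Prod>i\<in>insert s (insert t ({0..<n} - {s, t})). f i)"
        by (rule arg_cong)
      then show ?thesis using st by simp
    qed
    have "(\<Prod>i\<in>{0..<n} - {s, t}. A $$ (i, ?swap i)) = ?rest" by (rule prod.cong) auto
    then show "?term ?swap = - (A $$ (s, t) * A $$ (t, s) * ?rest)"
      using st split[of "\<lambda>i. A $$ (i, ?swap i)"] by (simp add: sign_swap_id)
    show "?term id = A $$ (s, s) * A $$ (t, t) * ?rest"
      using split[of "\<lambda>i. A $$ (i, i)"] by simp
  qed
  have "det A = (\<Sum>p\<in>{p. p permutes {0..<n}}. ?term p)" by (rule det_def'[OF A])
  also have "\<dots> = (\<Sum>p\<in>{id, ?swap}. ?term p)"
    using st vanish by (intro sum.mono_neutral_right)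
      (auto simp: finite_permutations permutes_id permutes_swap_id)
  also have "\<dots> = ?term id + ?term ?swap"
    using st by (subst sum.insert) (auto simp: fun_eq_iff Transposition.transpose_def)
  also have "\<dots> = ?rest * (A $$ (s, s) * A $$ (t, t) - A $$ (s, t) * A $$ (t, s))"
    unfolding id_term swap_term by (simp add: algebra_simps)
  finally show ?thesis by (simp only: mult.commute)
qed

lemma order_prod_linear_factors:
  fixes xs :: "'a::idom list"
  shows "order a (\<Prod>x\<leftarrow>xs. [:- x, 1:]) = count (mset xs) a"
proof (induction xs)
  case (Cons x xs)
  have "(\<Prod>y\<leftarrow>xs. [:- y, 1:]) \<noteq> 0" by (auto simp: prod_list_zero_iff)
  then show ?case using Cons.IH by (simp add: order_mult order_linear' del: mult_pCons_left)
qed (simp add: order_0I)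

lemma sorted_eq_if_prod_linear_factors_eq:
  fixes xs ys :: "'a::{idom, linorder} list"
  assumes "sorted xs" "sorted ys" and "(\<Prod>x\<leftarrow>xs. [:- x, 1:]) = (\<Prod>y\<leftarrow>ys. [:- y, 1:])"
  shows "xs = ys"
proof -
  have "mset xs = mset ys" by (rule multiset_eqI) (metis order_prod_linear_factors assms(3))
  then show ?thesis using assms(1,2) by (metis properties_for_sort)
qed

lemma index_mult_mat_sum:
  assumes "A \<in> carrier_mat n n" "i < n" "j < n"
  shows "(A * mat n n g) $$ (i, j) = (\<Sum>k<n. A $$ (i, k) * g (k, j))"
  using assms by (simp add: scalar_prod_def atLeast0LessThan)

lemma index_mat_mult_mat_sum:
  assumes "i < n" "j < n"
  shows "(mat n n f * mat n n g) $$ (i, j) = (\<Sum>k<n. f (i, k) * g (k, j))"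
  using assms by (simp add: scalar_prod_def atLeast0LessThan)

lemma sum_of_bool_point:
  fixes f :: "'b \<Rightarrow> 'a::semiring_1"
  assumes "finite A" "x \<in> A"
  shows "(\<Sum>k\<in>A. of_bool (k = x) * f k) = f x"
proof -
  have "(\<Sum>k\<in>A. of_bool (k = x) * f k) = (\<Sum>k\<in>A. if k = x then f k else 0)"
    by (rule sum.cong) auto
  then show ?thesis using assms by simp
qed

lemma char_poly_matrix_entry:
  assumes "A \<in> carrier_mat n n" "i < n" "j < n"
  shows "char_poly_matrix A $$ (i, j) = (if i = j then [:0, 1:] else 0) + [:- A $$ (i, j):]"
  using assms by (simp add: char_poly_matrix_def)

lemma norm_laplacian_carrier: "norm_laplacian N H \<in> carrier_mat N N"
  unfolding norm_laplacian_def degree_mat_inv_def adj_mat_def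
  by (intro minus_carrier_mat mult_carrier_mat[where n = N] mat_carrier)

lemma norm_laplacian_entry:
  assumes "i < N" "j < N"
  shows "norm_laplacian N H $$ (i, j) =
    (if i = j then 1 else real (card {h\<in>H. i \<in> h \<and> j \<in> h}) / real (hdeg H i))"
proof -
  let ?DA = "degree_mat_inv N H * adj_mat N H"
  have adj_dims: "dim_row (adj_mat N H) = N" "dim_col (adj_mat N H) = N"
    by (simp_all add: adj_mat_def)
  have dims: "dim_row ?DA = N" "dim_col ?DA = N"
    using adj_dims by (simp_all add: degree_mat_inv_def)
  have "?DA $$ (i, j) =
      (\<Sum>k\<in>{0..<N}. (if i = k then 1 / real (hdeg H i) else 0) * adj_mat N H $$ (k, j))"
    using assms adj_dims by (simp add: degree_mat_inv_def scalar_prod_def)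
  also have "\<dots> = (\<Sum>k\<in>{0..<N}. if k = i then 1 / real (hdeg H i) * adj_mat N H $$ (k, j) else 0)"
    by (rule sum.cong) auto
  also have "\<dots> = adj_mat N H $$ (i, j) / real (hdeg H i)"
    using assms by (simp add: sum.delta)
  finally show ?thesis
    using assms dims by (simp add: norm_laplacian_def adj_mat_def)
qed

lemma sorted_spectrum_eqI:
  assumes "is_sorted_spectrum N H ls" "sorted xs"
    and "char_poly (norm_laplacian N H) = (\<Prod>x\<leftarrow>xs. [:- x, 1:])"
  shows "ls = xs"
proof (rule sorted_eq_if_prod_linear_factors_eq)
  show "sorted ls" using assms(1) unfolding is_sorted_spectrum_def by blast
  have "(\<Prod>i<N. [:- (ls ! i), 1:]) = (\<Prod>x\<leftarrow>ls. [:- x, 1:])"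
    using assms(1) by (simp add: is_sorted_spectrum_def prod.list_conv_set_nth atLeast0LessThan)
  then show "(\<Prod>x\<leftarrow>ls. [:- x, 1:]) = (\<Prod>x\<leftarrow>xs. [:- x, 1:])"
    using assms(1,3) unfolding is_sorted_spectrum_def by simp
qed (fact assms(2))

definition lambda_minus :: "real \<Rightarrow> real \<Rightarrow> real" where
  "lambda_minus a b = (a + b + 1 - sqrt (1 + (a - b)\<^sup>2)) / 2"

definition lambda_plus :: "real \<Rightarrow> real \<Rightarrow> real" where
  "lambda_plus a b = (a + b + 1 + sqrt (1 + (a - b)\<^sup>2)) / 2"

lemma lambda_minus_plus: "lambda_minus a b + lambda_plus a b = a + b + 1"
  by (simp add: lambda_minus_def lambda_plus_def field_simps)

lemma lambda_minus_less_plus: "lambda_minus a b < lambda_plus a b"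
  by (simp add: lambda_minus_def lambda_plus_def add_pos_nonneg)

lemma one_le_lambda_minus:
  assumes "1 \<le> a" "1 \<le> b"
  shows "1 \<le> lambda_minus a b"
proof -
  have "1 + (a - b)\<^sup>2 \<le> (a + b - 1)\<^sup>2"
  proof -
    have "a * 1 \<le> a * b" "1 * b \<le> a * b" using assms by (intro mult_left_mono mult_right_mono; simp)+
    then show ?thesis by (simp add: power2_eq_square algebra_simps)
  qed
  then have "sqrt (1 + (a - b)\<^sup>2) \<le> a + b - 1"
    using assms real_sqrt_le_mono by fastforce
  then show ?thesis unfolding lambda_minus_def by simp
qed

lemma lambda_minus_plus_same: "lambda_minus a a = a" "lambda_plus a a = a + 1"
  by (simp_all add: lambda_minus_def lambda_plus_def)

lemma mult_linear_factors_lambda: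
  "[:- lambda_minus a b, 1:] * [:- lambda_plus a b, 1:] =
    [:- (a + 1 / 2), 1:] * [:- (b + 1 / 2), 1:] - [:1 / 4:]"
proof -
  have "(c - r) / 2 * ((c + r) / 2) = (c\<^sup>2 - r\<^sup>2) / 4" for c r :: real
    by (simp add: field_simps power2_eq_square)
  then have "lambda_minus a b * lambda_plus a b = ((a + b + 1)\<^sup>2 - (sqrt (1 + (a - b)\<^sup>2))\<^sup>2) / 4"
    unfolding lambda_minus_def lambda_plus_def .
  also have "\<dots> = ((a + b + 1)\<^sup>2 - (1 + (a - b)\<^sup>2)) / 4" by simp
  also have "\<dots> = (a + 1 / 2) * (b + 1 / 2) - 1 / 4" by (simp add: power2_eq_square field_simps)
  finally show ?thesis using lambda_minus_plus[of a b] by (simp add: algebra_simps)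
qed

datatype cell = Periphery | Petal1 | Petal2

locale two_petal_hyperflower =
  fixes N l :: nat and U h1 h2 :: "nat set" and H :: "nat set set"
  assumes vertices: "{..<N} = U \<union> h1 \<union> h2"
    and disjoint: "U \<inter> h1 = {}" "U \<inter> h2 = {}" "h1 \<inter> h2 = {}"
    and nonempty: "U \<noteq> {}" "h1 \<noteq> {}" "h2 \<noteq> {}"
    and card_U: "card U = l"
    and hyperedges: "H = (\<lambda>u. insert u h1) ` U \<union> (\<lambda>u. insert u h2) ` U"
begin

primrec cell_set :: "cell \<Rightarrow> nat set" where
  "cell_set Periphery = U" | "cell_set Petal1 = h1" | "cell_set Petal2 = h2"

definition cell :: "nat \<Rightarrow> cell" where
  "cell i = (if i \<in> U then Periphery else if i \<in> h1 then Petal1 else Petal2)"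

lemma cell_set_subset: "cell_set c \<subseteq> {..<N}"
  using vertices by (cases c) auto

lemma finite_cell_set [simp]: "finite (cell_set c)"
  using cell_set_subset finite_subset by blast

lemma finite_parts: "finite U" "finite h1" "finite h2"
  using finite_cell_set[of Periphery] finite_cell_set[of Petal1] finite_cell_set[of Petal2] by simp_all

lemma cell_eqI: "i \<in> cell_set c \<Longrightarrow> cell i = c"
  using disjoint by (cases c) (auto simp: cell_def)

lemma mem_cell_set_cell: "i < N \<Longrightarrow> i \<in> cell_set (cell i)"
  using vertices by (auto simp: cell_def)

lemma cell_eq_iff: "i < N \<Longrightarrow> cell i = c \<longleftrightarrow> i \<in> cell_set c"
  using cell_eqI mem_cell_set_cell by blast

definition base :: "cell \<Rightarrow> nat" where
  "base c = (SOME i. i \<in> cell_set c)"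

lemma base_mem: "base c \<in> cell_set c"
proof -
  have "cell_set c \<noteq> {}" using nonempty by (cases c) auto
  then show ?thesis unfolding base_def by (simp add: some_in_eq)
qed

lemma cell_base [simp]: "cell (base c) = c"
  by (rule cell_eqI[OF base_mem])

lemma base_less [simp]: "base c < N"
  using base_mem cell_set_subset by blast

lemma base_eq_iff [simp]: "base c = base d \<longleftrightarrow> c = d"
  by (metis cell_base)

lemma base_cases:
  obtains (kernel) "j = base Periphery" | (petal) c where "c \<noteq> Periphery" "j = base c"
    | (other) "j \<noteq> base (cell j)"
  by (metis cell.exhaust cell_base)

definition a :: real where "a = real (card h1)"
definition b :: real where "b = real (card h2)"

primrec cell_size :: "cell \<Rightarrow> real" where
  "cell_size Periphery = real l" | "cell_size Petal1 = a" | "cell_size Petal2 = b"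

lemma card_cell_set: "real (card (cell_set c)) = cell_size c"
  by (cases c) (simp_all add: card_U a_def b_def)

lemma card_parts_pos: "0 < l" "0 < card h1" "0 < card h2"
  using nonempty finite_parts by (simp_all add: card_gt_0_iff flip: card_U)

lemma sizes_pos: "0 < real l" "0 < a" "0 < b"
  using card_parts_pos by (simp_all add: a_def b_def)

lemma card_vertices: "N = l + card h1 + card h2"
proof -
  have "N = card (U \<union> h1 \<union> h2)" by (metis card_lessThan vertices)
  also have "\<dots> = l + card h1 + card h2"
    using disjoint card_U finite_parts by (simp add: card_Un_disjoint Int_Un_distrib2)
  finally show ?thesis .
qed

definition cell_sum :: "cell \<Rightarrow> (nat \<Rightarrow> real) \<Rightarrow> real" where
  "cell_sum c v = (\<Sum>k\<in>cell_set c. v k)"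

lemma sum_vertices: "(\<Sum>k<N. v k) = cell_sum Periphery v + cell_sum Petal1 v + cell_sum Petal2 v"
proof -
  have "(\<Sum>k<N. v k) = (\<Sum>k\<in>U \<union> h1 \<union> h2. v k)" by (simp add: vertices)
  also have "\<dots> = cell_sum Periphery v + cell_sum Petal1 v + cell_sum Petal2 v"
    using disjoint finite_parts by (simp add: cell_sum_def sum.union_disjoint Int_Un_distrib2)
  finally show ?thesis .
qed

lemma cell_sum_cellwise: "cell_sum c (\<lambda>k. f (cell k) * v k) = f c * cell_sum c v"
  unfolding cell_sum_def sum_distrib_left by (rule sum.cong) (simp_all add: cell_eqI)

lemma cell_sum_cellwise_const: "cell_sum c (\<lambda>k. f (cell k)) = cell_size c * f c"
  using cell_sum_cellwise[of c f "\<lambda>_. 1"] by (simp add: cell_sum_def card_cell_set)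

lemma cell_sum_indicator: "cell_sum c (\<lambda>k. of_bool (cell k = d)) = cell_size c * of_bool (c = d)"
  using cell_sum_cellwise_const[of c "\<lambda>c'. of_bool (c' = d)"] by simp

lemma cell_sum_point: "j < N \<Longrightarrow> cell_sum c (\<lambda>k. of_bool (k = j)) = of_bool (cell j = c)"
  by (simp add: cell_sum_def cell_eq_iff)

lemma cell_sum_diff: "cell_sum c (\<lambda>k. v k - w k) = cell_sum c v - cell_sum c w"
  by (simp add: cell_sum_def sum_subtractf)

lemma sum_point_plus_cellwise:
  assumes "i < N"
  shows "(\<Sum>k<N. (of_bool (k = i) * \<alpha> + \<beta> (cell k)) * v k) =
    \<alpha> * v i + \<beta> Periphery * cell_sum Periphery v + \<beta> Petal1 * cell_sum Petal1 v
      + \<beta> Petal2 * cell_sum Petal2 v"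
proof -
  have "(\<Sum>k<N. (of_bool (k = i) * \<alpha> + \<beta> (cell k)) * v k) =
      (\<Sum>k<N. of_bool (k = i) * (\<alpha> * v k)) + (\<Sum>k<N. \<beta> (cell k) * v k)"
    by (simp add: algebra_simps sum.distrib)
  also have "(\<Sum>k<N. of_bool (k = i) * (\<alpha> * v k)) = \<alpha> * v i"
    using assms by (simp add: sum_of_bool_point)
  finally show ?thesis by (simp add: sum_vertices cell_sum_cellwise add.assoc)
qed

lemma card_petal_edges:
  assumes "U \<inter> p = {}"
  shows "card ((\<lambda>u. insert u p) ` U) = l"
proof -
  have "inj_on (\<lambda>u. insert u p) U"
    using assms by (intro inj_onI) auto
  then show ?thesis using card_U by (simp add: card_image)
qed

lemma edges_through_periphery: "u \<in> U \<Longrightarrow> {h\<in>H. u \<in> h} = {insert u h1, insert u h2}"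
  using disjoint unfolding hyperedges by auto

lemma edges_through_petal:
  assumes "p \<in> {h1, h2}" "w \<in> p"
  shows "{h\<in>H. w \<in> h} = (\<lambda>u. insert u p) ` U"
  using assms disjoint unfolding hyperedges by auto

lemma hdeg_periphery: "u \<in> U \<Longrightarrow> hdeg H u = 2"
proof -
  assume u: "u \<in> U"
  obtain w where w: "w \<in> h1" using nonempty(2) by blast
  have "w \<notin> insert u h2" using u w disjoint by auto
  then have "insert u h1 \<noteq> insert u h2" using w by blast
  then show ?thesis unfolding hdeg_def edges_through_periphery[OF u] by simp
qed

lemma hdeg_petal: "p \<in> {h1, h2} \<Longrightarrow> w \<in> p \<Longrightarrow> hdeg H w = l"
  unfolding hdeg_def using disjoint by (subst edges_through_petal) (auto simp: card_petal_edges)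

lemma codegree_periphery:
  assumes u: "u \<in> U" and k: "k < N" "k \<noteq> u"
  shows "card {h\<in>H. u \<in> h \<and> k \<in> h} = of_bool (k \<notin> U)"
proof -
  have edges: "{h\<in>H. u \<in> h \<and> k \<in> h} = {h\<in>{insert u h1, insert u h2}. k \<in> h}"
    using edges_through_periphery[OF u] by blast
  from k(1) consider "k \<in> U" | "k \<in> h1" | "k \<in> h2" using vertices by blast
  then show ?thesis
  proof cases
    case 1
    then have "{h\<in>{insert u h1, insert u h2}. k \<in> h} = {}" using k(2) disjoint by auto
    then show ?thesis using 1 edges by simp
  next
    case 2
    then have "{h\<in>{insert u h1, insert u h2}. k \<in> h} = {insert u h1}" using k(2) disjoint by auto
    then show ?thesis using 2 edges disjoint by auto
  next
    case 3
    then have "{h\<in>{insert u h1, insert u h2}. k \<in> h} = {insert u h2}" using k(2) disjoint by auto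
    then show ?thesis using 3 edges disjoint by auto
  qed
qed

lemma codegree_petal:
  assumes p: "p \<in> {h1, h2}" "w \<in> p" and k: "k < N" "k \<noteq> w"
  shows "card {h\<in>H. w \<in> h \<and> k \<in> h} = (if k \<in> U then 1 else if k \<in> p then l else 0)"
proof -
  have edges: "{h\<in>H. w \<in> h \<and> k \<in> h} = {h\<in>(\<lambda>u. insert u p) ` U. k \<in> h}"
    using edges_through_petal[OF p] by blast
  have "U \<inter> p = {}" using p(1) disjoint by auto
  from k(1) consider "k \<in> U" | "k \<in> p" | "k \<notin> U" "k \<notin> p" by blast
  then show ?thesis
  proof cases
    case 1
    then have "{h\<in>(\<lambda>u. insert u p) ` U. k \<in> h} = {insert k p}" using \<open>U \<inter> p = {}\<close> by auto
    then show ?thesis using 1 edges by simp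
  next
    case 2
    then have "{h\<in>(\<lambda>u. insert u p) ` U. k \<in> h} = (\<lambda>u. insert u p) ` U" by auto
    then show ?thesis using 2 edges \<open>U \<inter> p = {}\<close> by (auto simp: card_petal_edges)
  next
    case 3
    then have none: "{h\<in>H. w \<in> h \<and> k \<in> h} = {}" using edges by auto
    show ?thesis unfolding none using 3 by simp
  qed
qed

lemma hdeg_vertex: "i < N \<Longrightarrow> hdeg H i = (if i \<in> U then 2 else l)"
  using vertices hdeg_periphery hdeg_petal[of h1] hdeg_petal[of h2] by auto

lemma codegree:
  assumes "i < N" "k < N" "k \<noteq> i"
  shows "card {h\<in>H. i \<in> h \<and> k \<in> h} =
    (if i \<in> U then of_bool (k \<notin> U) else if k \<in> U then 1 else if cell k = cell i then l else 0)"
proof -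
  from assms(1) consider "i \<in> U" | p where "p \<in> {h1, h2}" "i \<in> p" using vertices by blast
  then show ?thesis
  proof cases
    case 1
    then show ?thesis using assms codegree_periphery by simp
  next
    case 2
    have "i \<notin> U" using 2 disjoint by auto
    moreover have "cell k = cell i \<longleftrightarrow> k \<in> p" if "k \<notin> U"
      using 2 that disjoint assms(2) vertices by (auto simp: cell_def)
    ultimately show ?thesis using codegree_petal[OF 2 assms(2,3)] by auto
  qed
qed

primrec diag_coeff :: "cell \<Rightarrow> real" where
  "diag_coeff Periphery = 1" | "diag_coeff Petal1 = 0" | "diag_coeff Petal2 = 0"

fun block_coeff :: "cell \<Rightarrow> cell \<Rightarrow> real" where
  "block_coeff Periphery Periphery = 0"
| "block_coeff Periphery _ = 1 / 2"
| "block_coeff _ Periphery = 1 / real l"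
| "block_coeff c d = of_bool (c = d)"

abbreviation L :: "real mat" where
  "L \<equiv> norm_laplacian N H"

lemma laplacian_entry:
  assumes "i < N" "k < N"
  shows "L $$ (i, k) = of_bool (k = i) * diag_coeff (cell i) + block_coeff (cell i) (cell k)"
proof (cases "k = i")
  case True
  then show ?thesis using assms by (cases "cell i") (simp_all add: norm_laplacian_entry)
next
  case False
  then show ?thesis using assms sizes_pos
    by (auto simp: norm_laplacian_entry codegree hdeg_vertex cell_def)
qed

lemma laplacian_apply:
  assumes "i < N"
  shows "(\<Sum>k<N. L $$ (i, k) * v k) = diag_coeff (cell i) * v i
    + block_coeff (cell i) Periphery * cell_sum Periphery v
    + block_coeff (cell i) Petal1 * cell_sum Petal1 v + block_coeff (cell i) Petal2 * cell_sum Petal2 v"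
proof -
  have "(\<Sum>k<N. L $$ (i, k) * v k) =
      (\<Sum>k<N. (of_bool (k = i) * diag_coeff (cell i) + block_coeff (cell i) (cell k)) * v k)"
    using assms by (intro sum.cong) (simp_all add: laplacian_entry)
  also have "\<dots> = diag_coeff (cell i) * v i
    + block_coeff (cell i) Periphery * cell_sum Periphery v
    + block_coeff (cell i) Petal1 * cell_sum Petal1 v + block_coeff (cell i) Petal2 * cell_sum Petal2 v"
    by (rule sum_point_plus_cellwise[OF assms])
  finally show ?thesis .
qed

primrec kernel_coeff :: "cell \<Rightarrow> real" where
  "kernel_coeff Periphery = a * b" | "kernel_coeff Petal1 = - b" | "kernel_coeff Petal2 = - a"

lemma laplacian_kernel_vec:
  assumes "i < N"
  shows "(\<Sum>k<N. L $$ (i, k) * kernel_coeff (cell k)) = 0"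
  unfolding laplacian_apply[OF assms] cell_sum_cellwise_const
  using sizes_pos by (cases "cell i") (simp_all add: field_simps)

lemma laplacian_cell_indicator:
  assumes "i < N" "c \<noteq> Periphery"
  shows "(\<Sum>k<N. L $$ (i, k) * of_bool (cell k = c)) = cell_size c * block_coeff (cell i) c"
  using assms(2)
  by (cases c; cases "cell i") (simp_all add: laplacian_apply[OF assms(1)] cell_sum_indicator)

lemma laplacian_difference:
  assumes "i < N" "j < N" "j' < N" "cell j' = cell j"
  shows "(\<Sum>k<N. L $$ (i, k) * (of_bool (k = j) - of_bool (k = j'))) =
    diag_coeff (cell j) * (of_bool (i = j) - of_bool (i = j'))"
  using assms by (auto simp: laplacian_apply cell_sum_diff cell_sum_point)

definition basis_vec :: "nat \<Rightarrow> nat \<Rightarrow> real" where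
  "basis_vec j k =
    (if j = base Periphery then kernel_coeff (cell k)
     else if j = base (cell j) then of_bool (cell k = cell j)
     else of_bool (k = j) - of_bool (k = base (cell j)))"

(* Column j holds the coordinates of L applied to basis vector j; for instance
   L 1_h1 = z / (2 b) + (a + 1/2) 1_h1 + a / (2 b) 1_h2. *)
definition reduced_entry :: "nat \<Rightarrow> nat \<Rightarrow> real" where
  "reduced_entry m j =
    (if j = base Petal1 then
       of_bool (m = base Periphery) / (2 * b) + of_bool (m = base Petal1) * (a + 1 / 2)
         + of_bool (m = base Petal2) * (a / (2 * b))
     else if j = base Petal2 then
       of_bool (m = base Periphery) / (2 * a) + of_bool (m = base Petal1) * (b / (2 * a))
         + of_bool (m = base Petal2) * (b + 1 / 2)
     else if j = base Periphery then 0
     else of_bool (m = j) * diag_coeff (cell j))"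

lemma basis_vec_eq:
  "basis_vec (base Periphery) = (\<lambda>k. kernel_coeff (cell k))"
  "c \<noteq> Periphery \<Longrightarrow> basis_vec (base c) = (\<lambda>k. of_bool (cell k = c))"
  "j \<noteq> base (cell j) \<Longrightarrow> basis_vec j = (\<lambda>k. of_bool (k = j) - of_bool (k = base (cell j)))"
  by (auto simp: basis_vec_def fun_eq_iff)

lemma sum_reduced_petal_column:
  assumes "c \<noteq> Periphery"
  shows "(\<Sum>m<N. basis_vec m i * reduced_entry m (base c)) =
    (\<Sum>m\<in>{base Periphery, base Petal1, base Petal2}. basis_vec m i * reduced_entry m (base c))"
  using assms by (cases c; intro sum.mono_neutral_right; auto simp: reduced_entry_def)

lemma laplacian_basis_column:
  assumes "i < N" "j < N"
  shows "(\<Sum>k<N. L $$ (i, k) * basis_vec j k) = (\<Sum>m<N. basis_vec m i * reduced_entry m j)"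
proof (cases j rule: base_cases)
  case kernel
  then show ?thesis
    using laplacian_kernel_vec[OF assms(1)] by (simp add: basis_vec_eq reduced_entry_def)
next
  case (petal c)
  have "(\<Sum>m<N. basis_vec m i * reduced_entry m j) = cell_size c * block_coeff (cell i) c"
    using petal sizes_pos unfolding petal(2) sum_reduced_petal_column[OF petal(1)]
    by (cases c; cases "cell i") (simp_all add: basis_vec_eq reduced_entry_def field_simps)
  then show ?thesis
    using petal laplacian_cell_indicator[OF assms(1) petal(1)] by (simp add: basis_vec_eq)
next
  case other
  have reduced: "reduced_entry m j = of_bool (m = j) * diag_coeff (cell j)" for m
    using other by (auto simp: reduced_entry_def dest: sym)
  then have "(\<Sum>m<N. basis_vec m i * reduced_entry m j) = basis_vec j i * diag_coeff (cell j)"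
    using assms(2) by (subst sum.mono_neutral_right[where S = "{j}"]) auto
  moreover have "(\<Sum>k<N. L $$ (i, k) * basis_vec j k) = diag_coeff (cell j) * basis_vec j i"
    using laplacian_difference[OF assms base_less cell_base] by (simp add: basis_vec_eq(3)[OF other])
  ultimately show ?thesis by simp
qed

lemma cell_sum_basis_vec:
  assumes "j < N"
  shows "cell_sum c (basis_vec j) =
    (if j = base Periphery then cell_size c * kernel_coeff c
     else if j = base (cell j) then cell_size c * of_bool (c = cell j) else 0)"
proof (cases j rule: base_cases)
  case kernel
  then show ?thesis by (simp add: basis_vec_eq cell_sum_cellwise_const)
next
  case (petal c)
  then show ?thesis by (simp add: basis_vec_eq cell_sum_indicator)
next
  case other
  then have "j \<noteq> base Periphery" by (metis cell_base)
  with other assms show ?thesis by (simp add: basis_vec_eq cell_sum_diff cell_sum_point)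
qed

(* Row x of the inverse of basis_mat: the coordinates of v are read off from v x and the cell sums of v. *)
definition dual_weight :: "nat \<Rightarrow> cell \<Rightarrow> real" where
  "dual_weight x c =
    (if x = base Periphery then of_bool (c = Periphery) / (real l * a * b)
     else if x = base (cell x) then
       (of_bool (c = cell x) + of_bool (c = Periphery) / real l) / cell_size (cell x)
     else - of_bool (c = cell x) / cell_size (cell x))"

definition dual_entry :: "nat \<Rightarrow> nat \<Rightarrow> real" where
  "dual_entry x k = of_bool (k = x) * of_bool (x \<noteq> base (cell x)) + dual_weight x (cell k)"

lemma dual_basis_column:
  assumes "x < N" "j < N"
  shows "(\<Sum>k<N. dual_entry x k * basis_vec j k) = of_bool (x = j)"
proof -
  have "(\<Sum>k<N. dual_entry x k * basis_vec j k) =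
      of_bool (x \<noteq> base (cell x)) * basis_vec j x
      + dual_weight x Periphery * cell_sum Periphery (basis_vec j)
      + dual_weight x Petal1 * cell_sum Petal1 (basis_vec j)
      + dual_weight x Petal2 * cell_sum Petal2 (basis_vec j)"
    unfolding dual_entry_def by (rule sum_point_plus_cellwise[OF assms(1)])
  also have "\<dots> = of_bool (x = j)"
  proof (cases x rule: base_cases)
    case kernel
    then show ?thesis using sizes_pos assms(2)
      by (auto simp: cell_sum_basis_vec dual_weight_def basis_vec_def)
  next
    case (petal c)
    then show ?thesis using sizes_pos assms(2)
      by (cases c) (auto simp: cell_sum_basis_vec dual_weight_def basis_vec_def field_simps)
  next
    case other
    then show ?thesis using sizes_pos assms
      by (cases "cell x") (auto simp: cell_sum_basis_vec dual_weight_def basis_vec_def field_simps)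
  qed
  finally show ?thesis .
qed

definition basis_mat :: "real mat" where
  "basis_mat = mat N N (\<lambda>(k, j). basis_vec j k)"

definition dual_mat :: "real mat" where
  "dual_mat = mat N N (\<lambda>(x, k). dual_entry x k)"

definition reduced_mat :: "real mat" where
  "reduced_mat = mat N N (\<lambda>(m, j). reduced_entry m j)"

lemma carrier_mats:
  "basis_mat \<in> carrier_mat N N" "dual_mat \<in> carrier_mat N N" "reduced_mat \<in> carrier_mat N N"
  by (simp_all add: basis_mat_def dual_mat_def reduced_mat_def)

lemma dual_mat_basis_mat: "dual_mat * basis_mat = 1\<^sub>m N"
proof (rule eq_matI)
  fix x j assume "x < dim_row (1\<^sub>m N)" "j < dim_col (1\<^sub>m N)"
  then have ij: "x < N" "j < N" by simp_all
  show "(dual_mat * basis_mat) $$ (x, j) = 1\<^sub>m N $$ (x, j)"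
    unfolding dual_mat_def basis_mat_def index_mat_mult_mat_sum[OF ij]
    using ij by (simp add: dual_basis_column)
qed (simp_all add: dual_mat_def basis_mat_def)

lemma laplacian_basis_mat: "L * basis_mat = basis_mat * reduced_mat"
proof (rule eq_matI)
  fix i j assume "i < dim_row (basis_mat * reduced_mat)" "j < dim_col (basis_mat * reduced_mat)"
  then have ij: "i < N" "j < N" using carrier_mats by simp_all
  show "(L * basis_mat) $$ (i, j) = (basis_mat * reduced_mat) $$ (i, j)"
    unfolding basis_mat_def reduced_mat_def index_mat_mult_mat_sum[OF ij]
      index_mult_mat_sum[OF norm_laplacian_carrier ij]
    using ij by (simp add: laplacian_basis_column)
qed (use norm_laplacian_carrier carrier_mats in auto)

lemma similar_laplacian_reduced: "similar_mat L reduced_mat"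
proof -
  have inverse: "basis_mat * dual_mat = 1\<^sub>m N"
    by (rule mat_mult_left_right_inverse[OF carrier_mats(2,1) dual_mat_basis_mat])
  have "L = L * (basis_mat * dual_mat)"
    by (simp add: inverse right_mult_one_mat[OF norm_laplacian_carrier])
  also have "\<dots> = basis_mat * reduced_mat * dual_mat"
    using norm_laplacian_carrier carrier_mats
    by (simp add: assoc_mult_mat[symmetric, of L N N basis_mat N dual_mat N] laplacian_basis_mat)
  finally have "similar_mat_wit L reduced_mat basis_mat dual_mat"
    unfolding similar_mat_wit_def Let_def
    using norm_laplacian_carrier carrier_mats inverse dual_mat_basis_mat by auto
  then show ?thesis unfolding similar_mat_def by blast
qed

lemma reduced_entry_outside_petal_bases:
  assumes "j \<notin> {base Petal1, base Petal2}"
  shows "reduced_entry m j = of_bool (m = j \<and> j \<in> U - {base Periphery})"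
  using assms by (auto simp: reduced_entry_def cell_def)

lemma char_poly_matrix_reduced_entry:
  assumes "i < N" "j < N"
  shows "char_poly_matrix reduced_mat $$ (i, j) =
    (if i = j then [:0, 1:] else 0) + [:- reduced_entry i j:]"
  using char_poly_matrix_entry[OF carrier_mats(3) assms] assms by (simp add: reduced_mat_def)

lemma prod_diag_char_poly_matrix_reduced:
  "(\<Prod>j\<in>{0..<N} - {base Petal1, base Petal2}. char_poly_matrix reduced_mat $$ (j, j)) =
    [:0, 1:] ^ (N - l - 1) * [:- 1, 1:] ^ (l - 1)"
proof -
  let ?M = "char_poly_matrix reduced_mat"
  let ?S = "{0..<N} - {base Petal1, base Petal2}"
  let ?V = "U - {base Periphery}"
  have V_sub: "?V \<subseteq> ?S"
    using cell_set_subset[of Periphery] base_mem[of Petal1] base_mem[of Petal2] disjoint by auto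
  have "(\<Prod>j\<in>?S. ?M $$ (j, j)) = (\<Prod>j\<in>?S - ?V. ?M $$ (j, j)) * (\<Prod>j\<in>?V. ?M $$ (j, j))"
    using V_sub by (intro prod.subset_diff) auto
  also have "(\<Prod>j\<in>?S - ?V. ?M $$ (j, j)) = (\<Prod>j\<in>?S - ?V. [:0, 1:])"
    by (rule prod.cong) (auto simp: char_poly_matrix_reduced_entry reduced_entry_outside_petal_bases)
  also have "(\<Prod>j\<in>?V. ?M $$ (j, j)) = (\<Prod>j\<in>?V. [:- 1, 1:])"
  proof (rule prod.cong)
    fix j assume "j \<in> ?V"
    with V_sub have "j \<in> ?S" by blast
    with \<open>j \<in> ?V\<close> show "?M $$ (j, j) = [:- 1, 1:]"
      by (simp add: char_poly_matrix_reduced_entry reduced_entry_outside_petal_bases)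
  qed simp
  also have "(\<Prod>j\<in>?S - ?V. [:0, 1:]) * (\<Prod>j\<in>?V. [:- 1, 1:]) =
      [:0, 1:] ^ card (?S - ?V) * [:- 1, 1:] ^ card ?V"
    by simp
  also have "card ?V = l - 1" using base_mem[of Periphery] card_U by simp
  also have "card (?S - ?V) = N - l - 1"
  proof -
    have "card (?S - ?V) = card ?S - card ?V"
      using V_sub finite_parts(1) by (intro card_Diff_subset) auto
    moreover have "card ?S = N - 2" by (simp add: card_Diff_subset)
    ultimately show ?thesis
      using card_vertices card_parts_pos base_mem[of Periphery] card_U by simp
  qed
  finally show ?thesis .
qed

lemma petal_block_char_poly_matrix_reduced:
  "char_poly_matrix reduced_mat $$ (base Petal1, base Petal1)
      * char_poly_matrix reduced_mat $$ (base Petal2, base Petal2)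
    - char_poly_matrix reduced_mat $$ (base Petal1, base Petal2)
      * char_poly_matrix reduced_mat $$ (base Petal2, base Petal1)
    = [:- lambda_minus a b, 1:] * [:- lambda_plus a b, 1:]"
proof -
  have "char_poly_matrix reduced_mat $$ (base Petal1, base Petal1) = [:- (a + 1 / 2), 1:]"
    "char_poly_matrix reduced_mat $$ (base Petal2, base Petal2) = [:- (b + 1 / 2), 1:]"
    by (simp_all add: char_poly_matrix_reduced_entry reduced_entry_def)
  moreover have "char_poly_matrix reduced_mat $$ (base Petal1, base Petal2)
      * char_poly_matrix reduced_mat $$ (base Petal2, base Petal1) = [:1 / 4:]"
    using sizes_pos by (simp add: char_poly_matrix_reduced_entry reduced_entry_def)
  ultimately show ?thesis by (simp only: mult_linear_factors_lambda)
qed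

lemma char_poly_reduced_mat:
  "char_poly reduced_mat =
    [:0, 1:] ^ (N - l - 1) * [:- 1, 1:] ^ (l - 1) * ([:- lambda_minus a b, 1:] * [:- lambda_plus a b, 1:])"
  unfolding char_poly_def prod_diag_char_poly_matrix_reduced[symmetric]
    petal_block_char_poly_matrix_reduced[symmetric]
  by (rule det_diagonal_except_two_columns)
    (auto simp: carrier_mats(3) char_poly_matrix_reduced_entry reduced_entry_outside_petal_bases)

lemma petal_sizes_ge_1: "1 \<le> a" "1 \<le> b"
  using sizes_pos by (simp_all add: a_def b_def)

definition flower_spectrum :: "real list" where
  "flower_spectrum =
    replicate (N - l - 1) 0 @ replicate (l - 1) 1 @ [lambda_minus a b, lambda_plus a b]"

lemma sorted_flower_spectrum: "sorted flower_spectrum"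
  using one_le_lambda_minus[OF petal_sizes_ge_1] lambda_minus_less_plus[of a b]
  by (auto simp: flower_spectrum_def sorted_append)

lemma char_poly_laplacian: "char_poly L = (\<Prod>x\<leftarrow>flower_spectrum. [:- x, 1:])"
proof -
  have "(\<Prod>x\<leftarrow>flower_spectrum. [:- x, 1:]) =
      [:0, 1:] ^ (N - l - 1) * ([:- 1, 1:] ^ (l - 1) * ([:- lambda_minus a b, 1:] * [:- lambda_plus a b, 1:]))"
    by (simp only: flower_spectrum_def map_append map_replicate prod_list.append prod_list_replicate
        list.map prod_list.Cons prod_list.Nil mult_1_right minus_zero)
  then show ?thesis
    unfolding char_poly_similar[OF similar_laplacian_reduced] char_poly_reduced_mat
    by (simp only: mult.assoc)
qed

lemma flower_spectrum_top:
  "flower_spectrum ! (N - 1) = lambda_plus a b" "flower_spectrum ! (N - 2) = lambda_minus a b"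
proof -
  let ?zeros = "replicate (N - l - 1) (0::real) @ replicate (l - 1) 1"
  have spec: "flower_spectrum = ?zeros @ [lambda_minus a b, lambda_plus a b]"
    by (simp add: flower_spectrum_def)
  have len: "length ?zeros = N - 2" using card_vertices card_parts_pos by simp
  have "flower_spectrum ! (length ?zeros + 1) = lambda_plus a b"
    "flower_spectrum ! length ?zeros = lambda_minus a b"
    unfolding spec by (simp_all only: nth_append_length_plus nth_append_length) simp
  moreover have "N - 1 = N - 2 + 1" using card_vertices card_parts_pos by simp
  ultimately show "flower_spectrum ! (N - 1) = lambda_plus a b"
    "flower_spectrum ! (N - 2) = lambda_minus a b"
    unfolding len by simp_all
qed

lemma count_flower_spectrum:
  "count (mset flower_spectrum) 0 = N - l - 1" "l - 1 \<le> count (mset flower_spectrum) 1"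
proof -
  have "lambda_minus a b \<noteq> 0" "lambda_plus a b \<noteq> 0"
    using one_le_lambda_minus[OF petal_sizes_ge_1] lambda_minus_less_plus[of a b] by simp_all
  then show "count (mset flower_spectrum) 0 = N - l - 1" "l - 1 \<le> count (mset flower_spectrum) 1"
    by (simp_all add: flower_spectrum_def)
qed

lemma equal_petals_if_uniform:
  assumes "\<exists>c. \<forall>h\<in>H. card h = c"
  shows "a = b"
proof -
  obtain c where c: "\<forall>h\<in>H. card h = c" using assms by blast
  obtain u where u: "u \<in> U" using nonempty(1) by blast
  then have "card (insert u h1) = c" "card (insert u h2) = c"
    using c unfolding hyperedges by blast+
  moreover have "u \<notin> h1" "u \<notin> h2" using u disjoint by auto
  ultimately show ?thesis using finite_parts by (simp add: a_def b_def)
qed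

end

lemma two_petal_hyperflowerE:
  assumes "hypergraph N H" "hyperflower l 2 N H"
  obtains U h1 h2 where "two_petal_hyperflower N l U h1 h2 H"
proof -
  obtain U and hs :: "nat \<Rightarrow> nat set" where card: "card U = l"
    and petals: "\<forall>i<2. hs i \<noteq> {} \<and> hs i \<subseteq> {..<N} - U"
    and disj: "\<forall>i<2. \<forall>j<2. i \<noteq> j \<longrightarrow> hs i \<inter> hs j = {}"
    and cover: "{..<N} = U \<union> (\<Union>i<2. hs i)"
    and edges: "H = {hs i \<union> {u} | i u. i < 2 \<and> u \<in> U}"
    using assms(2) unfolding hyperflower_def by blast
  have petal0: "hs 0 \<noteq> {}" "hs 0 \<subseteq> {..<N} - U"
    and petal1: "hs 1 \<noteq> {}" "hs 1 \<subseteq> {..<N} - U"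
    using petals[rule_format, of 0] petals[rule_format, of 1] by simp_all
  have "U \<noteq> {}"
  proof
    (* otherwise H would be empty and the petal vertices isolated *)
    assume "U = {}"
    obtain w where "w \<in> hs 0" using petal0 by auto
    then have "w < N" using petal0 by auto
    then obtain h where "h \<in> H" using assms(1) unfolding hypergraph_def by blast
    then show False using \<open>U = {}\<close> edges by blast
  qed
  moreover have "(\<Union>i<2. hs i) = hs 0 \<union> hs 1" by (auto simp: less_2_cases_iff)
  moreover have "H = (\<lambda>u. insert u (hs 0)) ` U \<union> (\<lambda>u. insert u (hs 1)) ` U"
    unfolding edges by (auto simp: less_2_cases_iff)
  moreover have "hs 0 \<inter> hs 1 = {}" using disj by simp
  ultimately have "two_petal_hyperflower N l U (hs 0) (hs 1) H"
    using card petal0 petal1 cover by unfold_locales auto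
  then show thesis by (rule that)
qed

theorem mainTheorem5:
  fixes N l :: nat and H :: "nat set set" and ls :: "real list"
  assumes "hypergraph N H"
    and "hyperflower l 2 N H"
    and "is_sorted_spectrum N H ls"
  shows "count (mset ls) 0 = N - l - 1
    \<and> count (mset ls) 1 \<ge> l - 1
    \<and> ls ! (N - 1) > 1
    \<and> ls ! (N - 2) = real N - ls ! (N - 1) - real l + 1
    \<and> ls ! (N - 2) \<ge> 1
    \<and> ((\<exists>c. \<forall>h\<in>H. card h = c) \<longrightarrow>
         ls ! (N - 1) = (real N - real l) / 2 + 1 \<and> ls ! (N - 2) = (real N - real l) / 2)"
proof -
  obtain U h1 h2 where "two_petal_hyperflower N l U h1 h2 H"
    using assms(1,2) by (rule two_petal_hyperflowerE)
  then interpret two_petal_hyperflower N l U h1 h2 H .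
  have "ls = flower_spectrum"
    using assms(3) sorted_flower_spectrum char_poly_laplacian by (rule sorted_spectrum_eqI)
  moreover have "real N = real l + a + b" using card_vertices by (simp add: a_def b_def)
  moreover have "1 \<le> lambda_minus a b" by (rule one_le_lambda_minus[OF petal_sizes_ge_1])
  ultimately show ?thesis
    using count_flower_spectrum flower_spectrum_top lambda_minus_less_plus[of a b]
      lambda_minus_plus[of a b] equal_petals_if_uniform lambda_minus_plus_same[of b]
    by auto
qed

end
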